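(* Let $\mathcal{Y}=\{0,1\}$, let $y_t\in\{0,1\}$ and $v_t\in[0,1]$ for $t\in T=\{1,\dots,n\}$, and let $s\colon\{0,1\}\times[0,1]\to[-1,1]$ be a consistent scoring function for the mean, i.e. $\mathbb{E}_{\phi}[s(\cdot,p)]\le\mathbb{E}_\phi[s(\cdot,c)]$ for every $p,c\in[0,1]$ where $\phi$ is Bernoulli($p$). For $\gamma\in\{v_t:t\in T\}$ let $T_\gamma=\{t:v_t=\gamma\}$. Then $$\sup_{\sigma\colon[0,1]\to[0,1]}\sum_{t\in T}\big(s(y_t,v_t)-s(y_t,\sigma(v_t))\big)\ \le\ 4\sum_{\gamma\in\{v_t:t\in T\}}|T_\gamma|\,\Big|\frac1{|T_\gamma|}\sum_{t\in T_\gamma}y_t-\gamma\Big|.$$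
   Context: $\mathbb{E}_\phi[f]=\phi(\{0\})f(0)+\phi(\{1\})f(1)$ for a distribution $\phi$ on $\{0,1\}$; Bernoulli($p$) puts mass $p$ on $1$. *)

theory Defs
  imports Complex_Main
begin

definition bern_expect :: "real \<Rightarrow> (real \<Rightarrow> real) \<Rightarrow> real" where
  "bern_expect p f = (1 - p) * f 0 + p * f 1"

definition consistent_mean :: "(real \<Rightarrow> real \<Rightarrow> real) \<Rightarrow> bool" where
  "consistent_mean s \<longleftrightarrow>
     (\<forall>p\<in>{0..1}. \<forall>c\<in>{0..1}. bern_expect p (\<lambda>y. s y p) \<le> bern_expect p (\<lambda>y. s y c))"

end

theory Submission
  imports Defs
begin

text \<open>Group the rounds by their forecast \<open>\<gamma>\<close>. On a level set \<open>T\<^sub>\<gamma>\<close> the recalibration \<open>\<sigma>\<close> replaces the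
  constant forecast \<open>\<gamma>\<close> by the constant \<open>c = \<sigma> \<gamma>\<close>. For outcomes in \<open>{0,1}\<close> the score is affine in the
  outcome, so the regret on \<open>T\<^sub>\<gamma>\<close> is \<open>|T\<^sub>\<gamma>|\<close> times the expected regret under Bernoulli(\<open>\<gamma>\<close>), which
  consistency makes nonpositive, plus the calibration error \<open>\<Sum>y - |T\<^sub>\<gamma>| \<gamma>\<close> times the change of the
  increment \<open>s 1 - s 0\<close> between \<open>\<gamma>\<close> and \<open>c\<close>, which is at most 4 for scores in \<open>[-1,1]\<close>.\<close>

lemma consistent_mean_expected_regret_nonpos:
  assumes "consistent_mean s" and "p \<in> {0..1}" and "c \<in> {0..1}"
  shows "bern_expect p (\<lambda>a. s a p - s a c) \<le> 0"
  using assms unfolding consistent_mean_def bern_expect_def by (force simp: algebra_simps)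

lemma sum_binary_score_diff:
  fixes A :: "'a set" and y :: "'a \<Rightarrow> real"
  assumes "\<forall>t\<in>A. y t \<in> {0, 1}"
  shows "(\<Sum>t\<in>A. s (y t) g - s (y t) c)
       = real (card A) * bern_expect g (\<lambda>a. s a g - s a c)
         + ((\<Sum>t\<in>A. y t) - real (card A) * g) * ((s 1 g - s 0 g) - (s 1 c - s 0 c))"
proof -
  have "s (y t) g - s (y t) c = (s 0 g - s 0 c) + y t * ((s 1 g - s 0 g) - (s 1 c - s 0 c))"
    if "t \<in> A" for t
    using assms that by (auto simp: algebra_simps)
  then have "(\<Sum>t\<in>A. s (y t) g - s (y t) c)
      = real (card A) * (s 0 g - s 0 c) + (\<Sum>t\<in>A. y t) * ((s 1 g - s 0 g) - (s 1 c - s 0 c))"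
    by (simp add: sum.distrib sum_distrib_right)
  then show ?thesis
    by (simp add: bern_expect_def algebra_simps)
qed

lemma score_increment_change_bound:
  fixes s :: "real \<Rightarrow> real \<Rightarrow> real"
  assumes "\<forall>a\<in>{0, 1}. \<forall>p\<in>{0..1}. s a p \<in> {-1..1}" and "g \<in> {0..1}" and "c \<in> {0..1}"
  shows "\<bar>(s 1 g - s 0 g) - (s 1 c - s 0 c)\<bar> \<le> 4"
proof -
  have "s 0 g \<in> {-1..1}" "s 1 g \<in> {-1..1}" "s 0 c \<in> {-1..1}" "s 1 c \<in> {-1..1}"
    using assms by auto
  then show ?thesis by (auto simp: abs_le_iff)
qed

lemma constant_recalibration_regret_le:
  fixes A :: "'a set" and y :: "'a \<Rightarrow> real"
  assumes "finite A" and "A \<noteq> {}" and "\<forall>t\<in>A. y t \<in> {0, 1}"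
    and "g \<in> {0..1}" and "c \<in> {0..1}"
    and s_range: "\<forall>a\<in>{0, 1}. \<forall>p\<in>{0..1}. s a p \<in> {-1..1}"
    and s_cons: "consistent_mean s"
  shows "(\<Sum>t\<in>A. s (y t) g - s (y t) c)
       \<le> 4 * (real (card A) * \<bar>(\<Sum>t\<in>A. y t) / real (card A) - g\<bar>)"
proof -
  define N where "N = real (card A)"
  define e where "e = (\<Sum>t\<in>A. y t) - N * g"
  define \<delta> where "\<delta> = (s 1 g - s 0 g) - (s 1 c - s 0 c)"
  have N_pos: "N > 0"
    using assms(1,2) by (simp add: N_def card_gt_0_iff)
  have "(\<Sum>t\<in>A. s (y t) g - s (y t) c) = N * bern_expect g (\<lambda>a. s a g - s a c) + e * \<delta>"
    unfolding N_def e_def \<delta>_def by (rule sum_binary_score_diff) fact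
  also have "\<dots> \<le> e * \<delta>"
    using consistent_mean_expected_regret_nonpos[OF s_cons assms(4,5)] N_pos
    by (simp add: mult_nonneg_nonpos)
  also have "\<dots> \<le> \<bar>e\<bar> * \<bar>\<delta>\<bar>"
    by (metis abs_ge_self abs_mult)
  also have "\<dots> \<le> \<bar>e\<bar> * 4"
    unfolding \<delta>_def
    by (intro mult_left_mono score_increment_change_bound[OF s_range assms(4,5)]) simp
  also have "e = N * ((\<Sum>t\<in>A. y t) / N - g)"
    using N_pos by (simp add: e_def right_diff_distrib)
  finally show ?thesis
    using N_pos by (simp add: N_def abs_mult)
qed

theorem mainTheorem19:
  fixes n :: nat and y v :: "nat \<Rightarrow> real" and s :: "real \<Rightarrow> real \<Rightarrow> real"
  assumes y01: "\<forall>t\<in>{1..n}. y t \<in> {0, 1}"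
    and v01: "\<forall>t\<in>{1..n}. v t \<in> {0..1}"
    and s_range: "\<forall>a\<in>{0, 1}. \<forall>p\<in>{0..1}. s a p \<in> {-1..1}"
    and s_cons: "consistent_mean s"
  shows "\<forall>\<sigma> :: real \<Rightarrow> real. (\<forall>x\<in>{0..1}. \<sigma> x \<in> {0..1}) \<longrightarrow>
           (\<Sum>t\<in>{1..n}. s (y t) (v t) - s (y t) (\<sigma> (v t)))
           \<le> 4 * (\<Sum>\<gamma>\<in>v ` {1..n}.
                   real (card {t\<in>{1..n}. v t = \<gamma>}) *
                   \<bar>(\<Sum>t\<in>{t\<in>{1..n}. v t = \<gamma>}. y t) / real (card {t\<in>{1..n}. v t = \<gamma>}) - \<gamma>\<bar>)"
proof (intro allI impI)
  fix \<sigma> :: "real \<Rightarrow> real"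
  assume \<sigma>01: "\<forall>x\<in>{0..1}. \<sigma> x \<in> {0..1}"
  let ?T = "\<lambda>\<gamma>. {t\<in>{1..n}. v t = \<gamma>}"
  have "(\<Sum>t\<in>{1..n}. s (y t) (v t) - s (y t) (\<sigma> (v t)))
      = (\<Sum>\<gamma>\<in>v ` {1..n}. \<Sum>t\<in>?T \<gamma>. s (y t) \<gamma> - s (y t) (\<sigma> \<gamma>))"
    by (subst sum.image_gen[of "{1..n}"]) (auto intro!: sum.cong)
  also have "\<dots> \<le> (\<Sum>\<gamma>\<in>v ` {1..n}. 4 * (real (card (?T \<gamma>)) *
                   \<bar>(\<Sum>t\<in>?T \<gamma>. y t) / real (card (?T \<gamma>)) - \<gamma>\<bar>))"
  proof (rule sum_mono)
    fix \<gamma> assume "\<gamma> \<in> v ` {1..n}"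
    then have "?T \<gamma> \<noteq> {}" and "\<gamma> \<in> {0..1}"
      using v01 by auto
    then show "(\<Sum>t\<in>?T \<gamma>. s (y t) \<gamma> - s (y t) (\<sigma> \<gamma>))
        \<le> 4 * (real (card (?T \<gamma>)) * \<bar>(\<Sum>t\<in>?T \<gamma>. y t) / real (card (?T \<gamma>)) - \<gamma>\<bar>)"
      using y01 \<sigma>01 by (intro constant_recalibration_regret_le s_range s_cons) auto
  qed
  finally show "(\<Sum>t\<in>{1..n}. s (y t) (v t) - s (y t) (\<sigma> (v t)))
      \<le> 4 * (\<Sum>\<gamma>\<in>v ` {1..n}. real (card (?T \<gamma>)) * \<bar>(\<Sum>t\<in>?T \<gamma>. y t) / real (card (?T \<gamma>)) - \<gamma>\<bar>)"
    by (simp add: sum_distrib_left)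
qed

end
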